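(* Uniformly in any linear ordering $R=(A,<_R)$ (with $A\subseteq\mathbb{N}$), one may compute a tree $T_R\subseteq2^{<\omega}$ and a labeling function $l_R:A\to T_R$ such that: (1) for each $\sigma\in T_R$, the last bit of $\sigma$ is $0$ if and only if $\sigma=l_R(a)$ for some $a\in A$; (2) for each $a\in A$, $l_R(a)^\frown\overline1\in[T_R]$; (3) for each $a,b\in A$, $a<_R b$ if and only if $l_R(a)^\frown\overline1<l_R(b)^\frown\overline1$; (4) if $X\in[T_R]$, then $X=l_R(a)^\frown\overline1$ for some $a\in A$ if and only if $X$ has a successor (an immediate successor in the order) in $[T_R]$; (5) the order type of $[T_R]$ depends only on the order type of $R$; (6) two linear orders $R$ and $S$ are isomorphic if and only if $[T_R]$ and $[T_S]$ are order isomorphic.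
   Context: A tree is a subset of $2^{<\omega}$ (finite binary strings) closed under initial segments; $[T]$ is the set of $X\in2^\omega$ all of whose finite initial segments lie in $T$, ordered lexicographically: $X<Y$ iff $X\neq Y$ and $X(n)<Y(n)$ at the first $n$ where they differ. For a finite string $\sigma$, $\sigma^\frown\overline1$ is the infinite sequence consisting of $\sigma$ followed by all $1$'s. A linear ordering $R=(A,<_R)$ is given by its code $\{\langle a,b\rangle: a,b\in A,\ a<_R b\}\subseteq\mathbb{N}$; "uniformly compute" means a single oracle algorithm computes (the codes of) $T_R$ and $l_R$ from the code of $R$. *)

theory Defs
  imports Main "HOL-Library.Nat_Bijection"
begin

datatype recf =
    Zero
  | Succ
  | Proj nat
  | Orc
  | Comp recf "recf list"
  | Prec recf recf
  | Mn recf

inductive eval :: "(nat \<Rightarrow> nat) \<Rightarrow> recf \<Rightarrow> nat list \<Rightarrow> nat \<Rightarrow> bool" for X where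
  eval_Zero: "eval X Zero xs 0"
| eval_Succ: "eval X Succ (x # xs) (Suc x)"
| eval_Proj: "i < length xs \<Longrightarrow> eval X (Proj i) xs (xs ! i)"
| eval_Orc: "eval X Orc (x # xs) (X x)"
| eval_Comp: "length ys = length gs \<Longrightarrow> (\<forall>i < length gs. eval X (gs ! i) xs (ys ! i))
      \<Longrightarrow> eval X f ys z \<Longrightarrow> eval X (Comp f gs) xs z"
| eval_Prec0: "eval X f xs y \<Longrightarrow> eval X (Prec f g) (0 # xs) y"
| eval_PrecS: "eval X (Prec f g) (n # xs) y \<Longrightarrow> eval X g (y # n # xs) z
      \<Longrightarrow> eval X (Prec f g) (Suc n # xs) z"
| eval_Mn: "eval X f (n # xs) 0 \<Longrightarrow> (\<forall>m < n. \<exists>y. y \<noteq> 0 \<and> eval X f (m # xs) y)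
      \<Longrightarrow> eval X (Mn f) xs n"

definition computes_set :: "(nat \<Rightarrow> nat) \<Rightarrow> recf \<Rightarrow> nat set \<Rightarrow> bool" where
  "computes_set X e S \<longleftrightarrow> (\<forall>n. (n \<in> S \<longrightarrow> eval X e [n] 1) \<and> (n \<notin> S \<longrightarrow> eval X e [n] 0))"

definition computes_fun_on :: "(nat \<Rightarrow> nat) \<Rightarrow> recf \<Rightarrow> nat set \<Rightarrow> (nat \<Rightarrow> nat) \<Rightarrow> bool" where
  "computes_fun_on X e A g \<longleftrightarrow> (\<forall>a \<in> A. eval X e [a] (g a))"

text \<open>Finite binary strings are bool lists (False = 0, True = 1), coded bijectively
  by bijective base-2 numeration.\<close>
fun bin_code :: "bool list \<Rightarrow> nat" where
  "bin_code [] = 0"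
| "bin_code (b # bs) = 2 * bin_code bs + (if b then 2 else 1)"

definition is_tree :: "bool list set \<Rightarrow> bool" where
  "is_tree T \<longleftrightarrow> (\<forall>\<sigma> \<tau>. \<sigma> @ \<tau> \<in> T \<longrightarrow> \<sigma> \<in> T)"

definition paths :: "bool list set \<Rightarrow> (nat \<Rightarrow> bool) set" where
  "paths T = {X. \<forall>n. map X [0..<n] \<in> T}"

definition lexless :: "(nat \<Rightarrow> bool) \<Rightarrow> (nat \<Rightarrow> bool) \<Rightarrow> bool" where
  "lexless X Y \<longleftrightarrow> (\<exists>n. (\<forall>m<n. X m = Y m) \<and> \<not> X n \<and> Y n)"

definition lex_rel :: "((nat \<Rightarrow> bool) \<times> (nat \<Rightarrow> bool)) set" where
  "lex_rel = {(X, Y). lexless X Y}"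

definition ext_ones :: "bool list \<Rightarrow> nat \<Rightarrow> bool" where
  "ext_ones \<sigma> = (\<lambda>n. if n < length \<sigma> then \<sigma> ! n else True)"

definition strict_lin_order_on :: "nat set \<Rightarrow> (nat \<times> nat) set \<Rightarrow> bool" where
  "strict_lin_order_on A r \<longleftrightarrow> r \<subseteq> A \<times> A
     \<and> (\<forall>a. (a, a) \<notin> r)
     \<and> (\<forall>a b c. (a, b) \<in> r \<longrightarrow> (b, c) \<in> r \<longrightarrow> (a, c) \<in> r)
     \<and> (\<forall>a \<in> A. \<forall>b \<in> A. a \<noteq> b \<longrightarrow> (a, b) \<in> r \<or> (b, a) \<in> r)"

definition order_code :: "(nat \<times> nat) set \<Rightarrow> nat set" where
  "order_code r = {prod_encode (a, b) | a b. (a, b) \<in> r}"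

text \<open>Oracle presenting R = (A,<_R): the join of A and the code of <_R
  (even positions: A; odd positions: the code), as a 0/1 function.\<close>
definition order_oracle :: "nat set \<Rightarrow> (nat \<times> nat) set \<Rightarrow> nat \<Rightarrow> nat" where
  "order_oracle A r n =
     (if even n then (if n div 2 \<in> A then 1 else 0)
      else (if n div 2 \<in> order_code r then 1 else 0))"

definition ord_iso :: "'a set \<Rightarrow> ('a \<times> 'a) set \<Rightarrow> 'b set \<Rightarrow> ('b \<times> 'b) set \<Rightarrow> bool" where
  "ord_iso A r B s \<longleftrightarrow> (\<exists>f. bij_betw f A B \<and> (\<forall>x \<in> A. \<forall>y \<in> A. (x, y) \<in> r \<longleftrightarrow> (f x, f y) \<in> s))"

definition treeR :: "recf \<Rightarrow> (nat \<Rightarrow> nat) \<Rightarrow> bool list set" where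
  "treeR eT X = {\<sigma>. eval X eT [bin_code \<sigma>] 1}"

definition labR :: "recf \<Rightarrow> (nat \<Rightarrow> nat) \<Rightarrow> nat \<Rightarrow> bool list" where
  "labR el X a = (THE \<sigma>. eval X el [a] (bin_code \<sigma>))"

end

theory Submission
  imports Defs
begin

text \<open>A path through \<open>T\<^sub>R\<close> codes the cut \<open>L\<close> of \<open>R\<close> consisting of the elements below all its
  0-positions, and those 0-positions are exactly the \<open>n \<in> A - L\<close> lying below every earlier
  element of \<open>A - L\<close>. This identifies \<open>[T\<^sub>R]\<close>, ordered lexicographically, with the cuts
  of \<open>R\<close> ordered by inclusion, so its order type depends only on that of \<open>R\<close>. The only
  adjacent pairs of cuts are the elements strictly below some \<open>a\<close> and those below or equal to
  \<open>a\<close>; hence the paths with an immediate successor are those of the cuts strictly below some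
  \<open>a\<close>, which are the sequences \<open>l\<^sub>R(a)\<close> followed by 1s, and \<open>R\<close> is recovered from \<open>[T\<^sub>R]\<close>
  as the suborder of these paths. Membership in \<open>T\<^sub>R\<close> and the labels are bounded
  quantifications over the oracle, hence primitive recursive in it, uniformly.\<close>


section \<open>Order isomorphisms\<close>

lemma ord_iso_sym: "ord_iso A r B s \<Longrightarrow> ord_iso B s A r"
  unfolding ord_iso_def
proof (elim exE conjE, intro exI conjI ballI)
  fix f assume f: "bij_betw f A B" and mono: "\<forall>x\<in>A. \<forall>y\<in>A. (x, y) \<in> r \<longleftrightarrow> (f x, f y) \<in> s"
  show "bij_betw (inv_into A f) B A"
    using f by (rule bij_betw_inv_into)
  fix x y assume "x \<in> B" "y \<in> B"
  then have "inv_into A f x \<in> A" "inv_into A f y \<in> A"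
    and "f (inv_into A f x) = x" "f (inv_into A f y) = y"
    using f by (auto simp: bij_betw_def f_inv_into_f)
  then show "(x, y) \<in> s \<longleftrightarrow> (inv_into A f x, inv_into A f y) \<in> r"
    using mono by metis
qed

lemma ord_iso_trans: "ord_iso A r B s \<Longrightarrow> ord_iso B s C t \<Longrightarrow> ord_iso A r C t"
  unfolding ord_iso_def
proof (elim exE conjE, intro exI conjI ballI)
  fix f g
  assume f: "bij_betw f A B" "\<forall>x\<in>A. \<forall>y\<in>A. (x, y) \<in> r \<longleftrightarrow> (f x, f y) \<in> s"
    and g: "bij_betw g B C" "\<forall>x\<in>B. \<forall>y\<in>B. (x, y) \<in> s \<longleftrightarrow> (g x, g y) \<in> t"
  show "bij_betw (g \<circ> f) A C"
    using f(1) g(1) by (rule bij_betw_trans)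
  fix x y assume "x \<in> A" "y \<in> A"
  then show "(x, y) \<in> r \<longleftrightarrow> ((g \<circ> f) x, (g \<circ> f) y) \<in> t"
    using f g by (auto simp: bij_betw_def)
qed

definition cuts :: "'a set \<Rightarrow> ('a \<times> 'a) set \<Rightarrow> 'a set set" where
  "cuts A r = {L. L \<subseteq> A \<and> (\<forall>x\<in>L. \<forall>y\<in>A. (y, x) \<in> r \<longrightarrow> y \<in> L)}"

lemma ord_iso_cuts:
  assumes "ord_iso A r B s"
  shows "ord_iso (cuts A r) {(L, L'). L \<subset> L'} (cuts B s) {(L, L'). L \<subset> L'}"
proof -
  from assms obtain f where f: "bij_betw f A B"
    and mono: "\<forall>x\<in>A. \<forall>y\<in>A. (x, y) \<in> r \<longleftrightarrow> (f x, f y) \<in> s"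
    unfolding ord_iso_def by auto
  have inj: "inj_on f A" and img: "f ` A = B"
    using f by (auto simp: bij_betw_def)
  have image_cut: "f ` L \<in> cuts B s" if "L \<in> cuts A r" for L
    using that mono img unfolding cuts_def by fast
  have preimage_cut: "{x \<in> A. f x \<in> M} \<in> cuts A r" if "M \<in> cuts B s" for M
    using that mono img unfolding cuts_def by fast
  have image_preimage: "M = f ` {x \<in> A. f x \<in> M}" if "M \<in> cuts B s" for M
    using that img unfolding cuts_def by fast
  have "bij_betw (image f) (cuts A r) (cuts B s)"
    unfolding bij_betw_def
  proof
    show "inj_on (image f) (cuts A r)"
      using inj by (auto simp: cuts_def inj_on_def inj_on_image_eq_iff)
    show "image f ` cuts A r = cuts B s"
      using image_cut preimage_cut image_preimage by (smt (verit) image_iff subsetI subset_antisym)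
  qed
  moreover have "L \<subset> L' \<longleftrightarrow> f ` L \<subset> f ` L'" if "L \<in> cuts A r" "L' \<in> cuts A r" for L L'
    using that inj_on_image_mem_iff[OF inj] unfolding cuts_def by blast
  ultimately show ?thesis
    unfolding ord_iso_def by (intro exI[of _ "image f"]) auto
qed

definition with_succ :: "'a set \<Rightarrow> ('a \<times> 'a) set \<Rightarrow> 'a set" where
  "with_succ A r = {y \<in> A. \<exists>z\<in>A. (y, z) \<in> r \<and> \<not> (\<exists>w\<in>A. (y, w) \<in> r \<and> (w, z) \<in> r)}"

lemma ord_iso_with_succ:
  assumes "ord_iso A r B s"
  shows "ord_iso (with_succ A r) r (with_succ B s) s"
proof -
  from assms obtain f where f: "bij_betw f A B"
    and mono: "\<forall>x\<in>A. \<forall>y\<in>A. (x, y) \<in> r \<longleftrightarrow> (f x, f y) \<in> s"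
    unfolding ord_iso_def by auto
  have img: "f ` A = B" and inj: "inj_on f A"
    using f by (auto simp: bij_betw_def)
  have "y \<in> with_succ A r \<longleftrightarrow> f y \<in> with_succ B s" if "y \<in> A" for y
  proof -
    have "(\<exists>w\<in>B. (f y, w) \<in> s \<and> (w, f z) \<in> s) \<longleftrightarrow> (\<exists>w\<in>A. (y, w) \<in> r \<and> (w, z) \<in> r)"
      if "z \<in> A" for z
      using \<open>y \<in> A\<close> that mono img by blast
    then show ?thesis
      using \<open>y \<in> A\<close> mono img unfolding with_succ_def by (smt (verit) image_iff mem_Collect_eq)
  qed
  then have "f ` with_succ A r = with_succ B s"
    using img unfolding with_succ_def by (smt (verit) image_iff mem_Collect_eq subsetI subset_antisym)
  moreover have "inj_on f (with_succ A r)"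
    using inj by (rule inj_on_subset) (auto simp: with_succ_def)
  ultimately show ?thesis
    using mono unfolding ord_iso_def bij_betw_def with_succ_def by auto
qed


section \<open>The tree of a linear order\<close>

lemma lexless_irrefl: "\<not> lexless X X"
  unfolding lexless_def by auto

lemma lexless_asym: "lexless X Y \<Longrightarrow> \<not> lexless Y X"
  unfolding lexless_def by (metis linorder_neqE_nat)

lemma ext_ones_nth: "n < length \<sigma> \<Longrightarrow> ext_ones \<sigma> n = \<sigma> ! n"
  unfolding ext_ones_def by simp

lemma ext_ones_beyond: "length \<sigma> \<le> n \<Longrightarrow> ext_ones \<sigma> n"
  unfolding ext_ones_def by simp

text \<open>The 0-positions of the path of a cut \<open>L\<close> are the \<open>n \<in> A - L\<close> below every earlier element
  of \<open>A - L\<close> (\<open>cut_path\<close>). \<open>may_be_zero\<close> tests this without knowing \<open>L\<close>: an earlier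
  1-position \<open>m \<in> A\<close> must lie in \<open>L\<close>, hence below \<open>n\<close>, unless an earlier 0-position lies
  below \<open>m\<close> and so excludes it from being in \<open>L\<close>.\<close>

definition may_be_zero :: "nat set \<Rightarrow> (nat \<times> nat) set \<Rightarrow> (nat \<Rightarrow> bool) \<Rightarrow> nat \<Rightarrow> bool" where
  "may_be_zero A r f n \<longleftrightarrow> n \<in> A \<and> (\<forall>m<n. m \<in> A \<longrightarrow> (\<not> f m \<longrightarrow> (n, m) \<in> r)
      \<and> (f m \<longrightarrow> (m, n) \<in> r \<or> (\<exists>m'<m. \<not> f m' \<and> (m', m) \<in> r)))"

definition order_tree :: "nat set \<Rightarrow> (nat \<times> nat) set \<Rightarrow> bool list set" where
  "order_tree A r = {\<sigma>. \<forall>n<length \<sigma>. \<not> \<sigma> ! n \<longrightarrow> may_be_zero A r (nth \<sigma>) n}"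

definition cut_path :: "nat set \<Rightarrow> (nat \<times> nat) set \<Rightarrow> nat set \<Rightarrow> nat \<Rightarrow> bool" where
  "cut_path A r L n \<longleftrightarrow> \<not> (n \<in> A \<and> n \<notin> L \<and> (\<forall>m<n. m \<in> A \<longrightarrow> m \<notin> L \<longrightarrow> (n, m) \<in> r))"

definition below :: "(nat \<times> nat) set \<Rightarrow> nat \<Rightarrow> nat set" where
  "below r a = {x. (x, a) \<in> r}"

definition order_label :: "nat set \<Rightarrow> (nat \<times> nat) set \<Rightarrow> nat \<Rightarrow> bool list" where
  "order_label A r a = map (cut_path A r (below r a)) [0..<Suc a]"

lemma may_be_zero_cong:
  assumes "\<And>m. m < n \<Longrightarrow> f m = g m"
  shows "may_be_zero A r f n = may_be_zero A r g n"
proof -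
  have "(\<exists>m'<m. \<not> f m' \<and> (m', m) \<in> r) = (\<exists>m'<m. \<not> g m' \<and> (m', m) \<in> r)" if "m < n" for m
    using assms that by (meson less_trans)
  then show ?thesis
    unfolding may_be_zero_def using assms by (auto cong: conj_cong)
qed

locale strict_lin_order =
  fixes A :: "nat set" and r :: "(nat \<times> nat) set"
  assumes strict_lin_order: "strict_lin_order_on A r"
begin

lemma r_field: "(a, b) \<in> r \<Longrightarrow> a \<in> A \<and> b \<in> A"
  using strict_lin_order unfolding strict_lin_order_on_def by auto

lemma r_irrefl: "(a, a) \<notin> r"
  using strict_lin_order unfolding strict_lin_order_on_def by auto

lemma r_trans: "(a, b) \<in> r \<Longrightarrow> (b, c) \<in> r \<Longrightarrow> (a, c) \<in> r"
  using strict_lin_order unfolding strict_lin_order_on_def by blast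

lemma r_total: "a \<in> A \<Longrightarrow> b \<in> A \<Longrightarrow> a \<noteq> b \<Longrightarrow> (a, b) \<in> r \<or> (b, a) \<in> r"
  using strict_lin_order unfolding strict_lin_order_on_def by blast

lemma r_asym: "(a, b) \<in> r \<Longrightarrow> (b, a) \<notin> r"
  using r_trans r_irrefl by blast

abbreviation "T \<equiv> order_tree A r"

lemma paths_order_tree: "paths T = {X. \<forall>n. \<not> X n \<longrightarrow> may_be_zero A r X n}"
proof (intro set_eqI iffI; simp)
  fix X assume X: "X \<in> paths T"
  show "\<forall>n. \<not> X n \<longrightarrow> may_be_zero A r X n"
  proof (intro allI impI)
    fix n assume "\<not> X n"
    then have "may_be_zero A r (nth (map X [0..<Suc n])) n"
      using X unfolding paths_def order_tree_def by (auto simp del: upt_Suc)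
    then show "may_be_zero A r X n"
      by (subst (asm) may_be_zero_cong[where g = X]) (simp_all del: upt_Suc)
  qed
next
  fix X assume "\<forall>n. \<not> X n \<longrightarrow> may_be_zero A r X n"
  then have "may_be_zero A r (nth (map X [0..<k])) n" if "n < k" "\<not> X n" for k n
    using that by (subst may_be_zero_cong[where g = X]) auto
  then show "X \<in> paths T"
    unfolding paths_def order_tree_def by simp
qed

lemma path_zero: "X \<in> paths T \<Longrightarrow> \<not> X n \<Longrightarrow> may_be_zero A r X n"
  using paths_order_tree by auto

lemma path_zeros_decreasing: "X \<in> paths T \<Longrightarrow> \<not> X m \<Longrightarrow> \<not> X n \<Longrightarrow> m < n \<Longrightarrow> (n, m) \<in> r"
  using path_zero[of X n] path_zero[of X m] unfolding may_be_zero_def by auto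

lemma order_tree_is_tree: "is_tree T"
  unfolding is_tree_def order_tree_def
proof (clarsimp)
  fix \<sigma> \<tau> n
  assume "\<forall>n<length \<sigma> + length \<tau>. \<not> (\<sigma> @ \<tau>) ! n \<longrightarrow> may_be_zero A r (nth (\<sigma> @ \<tau>)) n"
    and n: "n < length \<sigma>" "\<not> \<sigma> ! n"
  then have "may_be_zero A r (nth (\<sigma> @ \<tau>)) n"
    by (auto simp: nth_append)
  then show "may_be_zero A r (nth \<sigma>) n"
    using n by (subst (asm) may_be_zero_cong[where g = "nth \<sigma>"]) (auto simp: nth_append)
qed

lemma ext_ones_in_paths: "\<sigma> \<in> T \<Longrightarrow> ext_ones \<sigma> \<in> paths T"
  unfolding paths_order_tree
proof (clarsimp)
  fix n assume \<sigma>: "\<sigma> \<in> T" and n: "\<not> ext_ones \<sigma> n"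
  then have "n < length \<sigma>"
    using ext_ones_beyond by (metis not_le)
  with n \<sigma> show "may_be_zero A r (ext_ones \<sigma>) n"
    unfolding order_tree_def
    by (subst may_be_zero_cong[where g = "nth \<sigma>"]) (auto simp: ext_ones_nth)
qed

lemma cut_less_outside: "L \<in> cuts A r \<Longrightarrow> x \<in> L \<Longrightarrow> a \<in> A \<Longrightarrow> a \<notin> L \<Longrightarrow> (x, a) \<in> r"
  unfolding cuts_def using r_total by blast

lemma cuts_linear: "L \<in> cuts A r \<Longrightarrow> L' \<in> cuts A r \<Longrightarrow> L \<subseteq> L' \<or> L' \<subseteq> L"
  using cut_less_outside r_asym unfolding cuts_def by blast

lemma cut_path_one_above_zero:
  assumes "L \<in> cuts A r" "m \<in> A" "m \<notin> L" "cut_path A r L m"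
  shows "\<exists>m'<m. \<not> cut_path A r L m' \<and> (m', m) \<in> r"
  using assms(2-)
proof (induction m rule: less_induct)
  case (less m)
  then obtain k where k: "k < m" "k \<in> A" "k \<notin> L" "(m, k) \<notin> r"
    unfolding cut_path_def by auto
  then have "(k, m) \<in> r"
    using r_total[of k m] less.prems by auto
  with k less.IH[of k] show ?case
    using r_trans less_trans by metis
qed

lemma cut_path_in_paths: "L \<in> cuts A r \<Longrightarrow> cut_path A r L \<in> paths T"
  unfolding paths_order_tree
proof (clarsimp)
  fix n assume L: "L \<in> cuts A r" and n: "\<not> cut_path A r L n"
  then have "n \<in> A" "n \<notin> L" and n_min: "\<forall>m<n. m \<in> A \<longrightarrow> m \<notin> L \<longrightarrow> (n, m) \<in> r"
    unfolding cut_path_def by auto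
  show "may_be_zero A r (cut_path A r L) n"
    unfolding may_be_zero_def
  proof (intro conjI \<open>n \<in> A\<close> allI impI)
    fix m assume m: "m < n" "m \<in> A"
    show "\<not> cut_path A r L m \<Longrightarrow> (n, m) \<in> r"
      using n_min m unfolding cut_path_def by auto
    show "(m, n) \<in> r \<or> (\<exists>m'<m. \<not> cut_path A r L m' \<and> (m', m) \<in> r)" if "cut_path A r L m"
      using cut_less_outside[OF L _ \<open>n \<in> A\<close> \<open>n \<notin> L\<close>] cut_path_one_above_zero[OF L m(2) _ that]
      by blast
  qed
qed

definition cut_of_path :: "(nat \<Rightarrow> bool) \<Rightarrow> nat set" where
  "cut_of_path X = {a \<in> A. \<forall>n. \<not> X n \<longrightarrow> (a, n) \<in> r}"

lemma cut_of_path_in_cuts: "cut_of_path X \<in> cuts A r"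
  unfolding cuts_def cut_of_path_def using r_trans by blast

lemma path_zero_less_outside:
  assumes X: "X \<in> paths T" and n: "\<not> X n"
    and m: "m < n" "m \<in> A" "m \<notin> cut_of_path X"
  shows "(n, m) \<in> r"
proof -
  have zero_n: "may_be_zero A r X n"
    using path_zero[OF X n] .
  from m obtain z where z: "\<not> X z" "(m, z) \<notin> r"
    unfolding cut_of_path_def by auto
  have "z \<in> A"
    using path_zero[OF X z(1)] unfolding may_be_zero_def by auto
  show ?thesis
  proof (cases "X m")
    case False
    then show ?thesis
      using zero_n m unfolding may_be_zero_def by auto
  next
    case True
    show ?thesis
    proof (cases "\<exists>m'<m. \<not> X m' \<and> (m', m) \<in> r")
      case True
      then obtain m' where "m' < m" "\<not> X m'" "(m', m) \<in> r"
        by auto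
      then show ?thesis
        using path_zeros_decreasing[OF X _ n, of m'] m(1) r_trans by auto
    next
      case no_earlier_zero: False
      with True zero_n m have mn: "(m, n) \<in> r"
        unfolding may_be_zero_def by auto
      have zm: "(z, m) \<in> r"
        using r_total[OF m(2) \<open>z \<in> A\<close>] z True by auto
      consider "z < n" | "n < z"
        using zm mn r_asym by (metis linorder_neqE_nat)
      then show ?thesis
      proof cases
        case 1
        then show ?thesis
          using path_zeros_decreasing[OF X z(1) n] zm mn r_trans r_irrefl by blast
      next
        case 2
        then have "(m, z) \<in> r"
          using path_zero[OF X z(1)] True m no_earlier_zero less_trans[OF m(1)]
          unfolding may_be_zero_def by blast
        then show ?thesis
          using z(2) by contradiction
      qed
    qed
  qed
qed

lemma path_record_outside_zero:
  assumes X: "X \<in> paths T"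
    and n: "n \<in> A" "n \<notin> cut_of_path X"
    and n_min: "\<forall>m<n. m \<in> A \<longrightarrow> m \<notin> cut_of_path X \<longrightarrow> (n, m) \<in> r"
  shows "\<not> X n"
proof
  assume "X n"
  from n obtain z where z: "\<not> X z" "(n, z) \<notin> r"
    unfolding cut_of_path_def by auto
  have "z \<in> A"
    using path_zero[OF X z(1)] unfolding may_be_zero_def by auto
  have z_out: "z \<notin> cut_of_path X"
    using z r_irrefl unfolding cut_of_path_def by auto
  have zn: "(z, n) \<in> r"
    using r_total[OF \<open>z \<in> A\<close> n(1)] z \<open>X n\<close> by auto
  consider "z < n" | "n < z"
    using \<open>X n\<close> z(1) by (metis linorder_neqE_nat)
  then show False
  proof cases
    case 1
    then show False
      using n_min \<open>z \<in> A\<close> z_out zn r_asym by auto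
  next
    case 2
    then obtain m' where m': "m' < n" "\<not> X m'" "(m', n) \<in> r"
      using path_zero[OF X z(1)] \<open>X n\<close> n(1) z(2) unfolding may_be_zero_def by auto
    then have "m' \<notin> cut_of_path X"
      using r_irrefl unfolding cut_of_path_def by auto
    then show False
      using n_min m' r_field r_asym by blast
  qed
qed

lemma path_eq_cut_path: "X \<in> paths T \<Longrightarrow> X = cut_path A r (cut_of_path X)"
proof
  fix n assume X: "X \<in> paths T"
  have "\<not> X n \<longleftrightarrow> n \<in> A \<and> n \<notin> cut_of_path X
      \<and> (\<forall>m<n. m \<in> A \<longrightarrow> m \<notin> cut_of_path X \<longrightarrow> (n, m) \<in> r)"
  proof
    assume "\<not> X n"
    moreover have "n \<notin> cut_of_path X"
      using \<open>\<not> X n\<close> r_irrefl unfolding cut_of_path_def by auto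
    ultimately show "n \<in> A \<and> n \<notin> cut_of_path X
        \<and> (\<forall>m<n. m \<in> A \<longrightarrow> m \<notin> cut_of_path X \<longrightarrow> (n, m) \<in> r)"
      using path_zero[OF X] path_zero_less_outside[OF X] unfolding may_be_zero_def by blast
  qed (use path_record_outside_zero[OF X] in blast)
  then show "X n = cut_path A r (cut_of_path X) n"
    unfolding cut_path_def by auto
qed

lemma paths_eq_image_cut_path: "paths T = cut_path A r ` cuts A r"
  using cut_path_in_paths path_eq_cut_path cut_of_path_in_cuts by blast

lemma lexless_cut_path_if_psubset:
  assumes L: "L \<in> cuts A r" and L': "L' \<in> cuts A r" and "L \<subset> L'"
  shows "lexless (cut_path A r L) (cut_path A r L')"
proof -
  define n where "n = (LEAST k. k \<in> L' - L)"
  have "\<exists>k. k \<in> L' - L"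
    using \<open>L \<subset> L'\<close> by auto
  then have n: "n \<in> L'" "n \<notin> L"
    unfolding n_def by (metis DiffE LeastI_ex)+
  have agree: "m \<in> L \<longleftrightarrow> m \<in> L'" if "m < n" for m
    using not_less_Least[of m "\<lambda>k. k \<in> L' - L"] that \<open>L \<subset> L'\<close> unfolding n_def by blast
  have "n \<in> A"
    using n L' unfolding cuts_def by auto
  have "(n, m) \<in> r" if "m < n" "m \<in> A" "m \<notin> L" for m
    using that agree[of m] L' n \<open>n \<in> A\<close> r_total[of m n] unfolding cuts_def by auto
  then have "\<not> cut_path A r L n"
    using n \<open>n \<in> A\<close> unfolding cut_path_def by auto
  moreover have "cut_path A r L' n"
    using n unfolding cut_path_def by auto
  moreover have "cut_path A r L m = cut_path A r L' m" if "m < n" for m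
    using that agree unfolding cut_path_def by (auto intro!: ex_cong)
  ultimately show ?thesis
    unfolding lexless_def by blast
qed

lemma lexless_cut_path_iff:
  assumes L: "L \<in> cuts A r" and L': "L' \<in> cuts A r"
  shows "lexless (cut_path A r L) (cut_path A r L') \<longleftrightarrow> L \<subset> L'"
  using lexless_cut_path_if_psubset[OF L L'] lexless_cut_path_if_psubset[OF L' L]
    cuts_linear[OF L L'] lexless_irrefl lexless_asym
  by (metis psubsetI)

lemma inj_on_cut_path: "inj_on (cut_path A r) (cuts A r)"
  by (rule inj_onI) (metis lexless_cut_path_iff cuts_linear lexless_irrefl psubsetI)

lemma ord_iso_cuts_paths: "ord_iso (cuts A r) {(L, L'). L \<subset> L'} (paths T) lex_rel"
  unfolding ord_iso_def
  by (rule exI[of _ "cut_path A r"])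
    (auto simp: bij_betw_def inj_on_cut_path paths_eq_image_cut_path lex_rel_def lexless_cut_path_iff)

lemma below_in_cuts: "below r a \<in> cuts A r"
  unfolding cuts_def below_def using r_field r_trans by blast

lemma insert_below_in_cuts: "a \<in> A \<Longrightarrow> insert a (below r a) \<in> cuts A r"
  unfolding cuts_def below_def using r_field r_trans by blast

lemma below_psubset_iff: "a \<in> A \<Longrightarrow> b \<in> A \<Longrightarrow> below r a \<subset> below r b \<longleftrightarrow> (a, b) \<in> r"
  unfolding below_def using r_trans r_irrefl r_total by blast

lemma ext_ones_order_label: "a \<in> A \<Longrightarrow> ext_ones (order_label A r a) = cut_path A r (below r a)"
proof
  fix n assume a: "a \<in> A"
  show "ext_ones (order_label A r a) n = cut_path A r (below r a) n"
  proof (cases "n \<le> a")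
    case True
    then show ?thesis
      by (simp add: ext_ones_nth order_label_def del: upt_Suc)
  next
    case False
    then have "cut_path A r (below r a) n"
      using a r_irrefl unfolding cut_path_def below_def by (blast dest: not_le_imp_less)
    then show ?thesis
      using False by (simp add: ext_ones_beyond order_label_def)
  qed
qed

lemma order_label_in_tree: "a \<in> A \<Longrightarrow> order_label A r a \<in> T"
  using cut_path_in_paths[OF below_in_cuts] unfolding order_label_def paths_def by blast

lemma ext_ones_order_label_in_paths: "a \<in> A \<Longrightarrow> ext_ones (order_label A r a) \<in> paths T"
  using ext_ones_order_label cut_path_in_paths below_in_cuts by auto

lemma less_iff_lexless_order_label:
  "a \<in> A \<Longrightarrow> b \<in> A \<Longrightarrow>
    (a, b) \<in> r \<longleftrightarrow> lexless (ext_ones (order_label A r a)) (ext_ones (order_label A r b))"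
  using ext_ones_order_label lexless_cut_path_iff below_in_cuts below_psubset_iff by auto

text \<open>The label of \<open>a\<close> ends at \<open>a\<close>, the \<open>r\<close>-least element outside \<open>below r a\<close>; conversely a
  string of \<open>T\<close> ending in 0 at position \<open>n\<close> codes a path whose cut is \<open>below r n\<close>.\<close>

lemma ends_with_zero_iff_order_label:
  assumes \<sigma>: "\<sigma> \<in> T"
  shows "(\<sigma> \<noteq> [] \<and> \<not> last \<sigma>) \<longleftrightarrow> (\<exists>a\<in>A. \<sigma> = order_label A r a)"
proof
  assume "\<exists>a\<in>A. \<sigma> = order_label A r a"
  then obtain a where "a \<in> A" "\<sigma> = order_label A r a"
    by auto
  then show "\<sigma> \<noteq> [] \<and> \<not> last \<sigma>"
    using r_irrefl r_total by (auto simp: order_label_def cut_path_def below_def)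
next
  assume last_zero: "\<sigma> \<noteq> [] \<and> \<not> last \<sigma>"
  define n where "n = length \<sigma> - 1"
  define X where "X = ext_ones \<sigma>"
  have len: "length \<sigma> = Suc n"
    using last_zero unfolding n_def by auto
  have X: "X \<in> paths T"
    unfolding X_def using ext_ones_in_paths[OF \<sigma>] .
  have "\<not> X n"
    using last_zero last_conv_nth[of \<sigma>] len unfolding X_def by (simp add: ext_ones_nth)
  then have "n \<in> A"
    using path_zero[OF X] unfolding may_be_zero_def by auto
  have zeros_le_n: "k \<le> n" if "\<not> X k" for k
    using that len ext_ones_beyond unfolding X_def by (metis not_less_eq_eq)
  have "cut_of_path X = below r n"
    using \<open>\<not> X n\<close> path_zeros_decreasing[OF X _ \<open>\<not> X n\<close>] zeros_le_n r_field r_trans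
    unfolding cut_of_path_def below_def by (metis le_neq_implies_less)
  then have "\<sigma> ! i = cut_path A r (below r n) i" if "i < length \<sigma>" for i
    using path_eq_cut_path[OF X] ext_ones_nth[OF that] unfolding X_def by simp
  then have "\<sigma> = order_label A r n"
    using len by (intro nth_equalityI) (auto simp: order_label_def simp del: upt_Suc)
  then show "\<exists>a\<in>A. \<sigma> = order_label A r a"
    using \<open>n \<in> A\<close> by auto
qed

text \<open>A cut with an immediate successor \<open>L'\<close> is \<open>below r a\<close> for any \<open>a \<in> L' - L\<close>, and
  \<open>below r a\<close> is followed by \<open>insert a (below r a)\<close>.\<close>

lemma with_succ_cuts_iff: "L \<in> with_succ (cuts A r) {(L, L'). L \<subset> L'} \<longleftrightarrow> (\<exists>a\<in>A. L = below r a)"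
proof
  assume "L \<in> with_succ (cuts A r) {(L, L'). L \<subset> L'}"
  then obtain L' where L: "L \<in> cuts A r" and L': "L' \<in> cuts A r" "L \<subset> L'"
    and adjacent: "\<not> (\<exists>M\<in>cuts A r. L \<subset> M \<and> M \<subset> L')"
    unfolding with_succ_def by auto
  then obtain a where a: "a \<in> L'" "a \<notin> L"
    by auto
  then have "a \<in> A"
    using L' unfolding cuts_def by auto
  have "L \<subseteq> below r a"
    using cut_less_outside[OF L _ \<open>a \<in> A\<close> a(2)] unfolding below_def by auto
  moreover have "below r a \<subset> L'"
    using a L' r_irrefl r_field unfolding cuts_def below_def by auto
  ultimately have "L = below r a"
    using adjacent below_in_cuts by blast
  then show "\<exists>a\<in>A. L = below r a"
    using \<open>a \<in> A\<close> by blast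
next
  assume "\<exists>a\<in>A. L = below r a"
  then obtain a where "a \<in> A" "L = below r a"
    by blast
  moreover have "below r a \<subset> insert a (below r a)"
    using r_irrefl unfolding below_def by auto
  ultimately show "L \<in> with_succ (cuts A r) {(L, L'). L \<subset> L'}"
    unfolding with_succ_def using below_in_cuts insert_below_in_cuts by blast
qed

lemma order_label_iff_with_succ:
  assumes Y: "Y \<in> paths T"
  shows "(\<exists>a\<in>A. Y = ext_ones (order_label A r a)) \<longleftrightarrow> Y \<in> with_succ (paths T) lex_rel"
proof -
  obtain L where L: "L \<in> cuts A r" "Y = cut_path A r L"
    using Y paths_eq_image_cut_path by auto
  have "Y \<in> with_succ (paths T) lex_rel \<longleftrightarrow> L \<in> with_succ (cuts A r) {(L, L'). L \<subset> L'}"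
    using L inj_on_cut_path
    unfolding with_succ_def lex_rel_def paths_eq_image_cut_path
    by (auto simp: lexless_cut_path_iff inj_on_eq_iff)
  also have "\<dots> \<longleftrightarrow> (\<exists>a\<in>A. Y = ext_ones (order_label A r a))"
    unfolding with_succ_cuts_iff
    using L inj_on_cut_path below_in_cuts ext_ones_order_label by (auto simp: inj_on_eq_iff)
  finally show ?thesis
    by simp
qed

lemma ord_iso_with_succ_paths: "ord_iso A r (with_succ (paths T) lex_rel) lex_rel"
  unfolding ord_iso_def
proof (intro exI[of _ "\<lambda>a. ext_ones (order_label A r a)"] conjI ballI)
  show "bij_betw (\<lambda>a. ext_ones (order_label A r a)) A (with_succ (paths T) lex_rel)"
    unfolding bij_betw_def
  proof
    show "inj_on (\<lambda>a. ext_ones (order_label A r a)) A"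
      by (rule inj_onI) (metis less_iff_lexless_order_label r_total lexless_irrefl)
    show "(\<lambda>a. ext_ones (order_label A r a)) ` A = with_succ (paths T) lex_rel"
      using order_label_iff_with_succ ext_ones_order_label_in_paths
      unfolding with_succ_def by blast
  qed
qed (simp add: less_iff_lexless_order_label lex_rel_def)

end


lemma ord_iso_iff_ord_iso_paths_order_tree:
  assumes "strict_lin_order_on A r" "strict_lin_order_on B s"
  shows "ord_iso A r B s \<longleftrightarrow> ord_iso (paths (order_tree A r)) lex_rel (paths (order_tree B s)) lex_rel"
proof -
  interpret A: strict_lin_order A r
    using assms(1) by (rule strict_lin_order.intro)
  interpret B: strict_lin_order B s
    using assms(2) by (rule strict_lin_order.intro)
  show ?thesis
  proof
    assume "ord_iso A r B s"
    then have "ord_iso (cuts A r) {(L, L'). L \<subset> L'} (cuts B s) {(L, L'). L \<subset> L'}"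
      by (rule ord_iso_cuts)
    then show "ord_iso (paths (order_tree A r)) lex_rel (paths (order_tree B s)) lex_rel"
      using ord_iso_sym[OF A.ord_iso_cuts_paths] B.ord_iso_cuts_paths by (blast intro: ord_iso_trans)
  next
    assume "ord_iso (paths (order_tree A r)) lex_rel (paths (order_tree B s)) lex_rel"
    then have "ord_iso (with_succ (paths (order_tree A r)) lex_rel) lex_rel
        (with_succ (paths (order_tree B s)) lex_rel) lex_rel"
      by (rule ord_iso_with_succ)
    then show "ord_iso A r B s"
      using A.ord_iso_with_succ_paths ord_iso_sym[OF B.ord_iso_with_succ_paths] by (blast intro: ord_iso_trans)
  qed
qed

section \<open>Oracle-computable functions\<close>

inductive_cases eval_ZeroE: "eval X Zero xs y"
inductive_cases eval_SuccE: "eval X Succ xs y"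
inductive_cases eval_ProjE: "eval X (Proj i) xs y"
inductive_cases eval_OrcE: "eval X Orc xs y"
inductive_cases eval_CompE: "eval X (Comp f gs) xs y"
inductive_cases eval_PrecE: "eval X (Prec f g) xs y"
inductive_cases eval_MnE: "eval X (Mn f) xs y"

lemma eval_deterministic: "eval X e xs y \<Longrightarrow> eval X e xs y' \<Longrightarrow> y = y'"
proof (induction arbitrary: y' rule: eval.induct)
  case (eval_Comp ys gs xs f z)
  from eval_Comp.prems obtain ys' where "length ys' = length gs"
    and gs: "\<forall>i<length gs. eval X (gs ! i) xs (ys' ! i)" and "eval X f ys' y'"
    by (auto elim: eval_CompE)
  moreover have "ys = ys'"
    using eval_Comp.hyps(1) eval_Comp.IH(1) gs \<open>length ys' = length gs\<close>
    by (intro nth_equalityI) auto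
  ultimately show ?case
    using eval_Comp.IH(2) by auto
next
  case (eval_PrecS f g n xs y z)
  from eval_PrecS.prems obtain y2 where "eval X (Prec f g) (n # xs) y2" "eval X g (y2 # n # xs) y'"
    by (auto elim: eval_PrecE)
  then show ?case
    using eval_PrecS.IH by metis
next
  case (eval_Mn f n xs)
  from eval_Mn.prems have "eval X f (y' # xs) 0" and "\<forall>m<y'. \<exists>y. y \<noteq> 0 \<and> eval X f (m # xs) y"
    by (auto elim: eval_MnE)
  with eval_Mn.IH show ?case
    by (metis linorder_neqE_nat)
next
  case (eval_Prec0 f xs y g)
  from eval_Prec0.prems show ?case
    by (auto elim: eval_PrecE intro: eval_Prec0.IH)
qed (auto elim: eval_ZeroE eval_SuccE eval_ProjE eval_OrcE)

definition computes :: "(nat \<Rightarrow> nat) \<Rightarrow> recf \<Rightarrow> nat \<Rightarrow> (nat list \<Rightarrow> nat) \<Rightarrow> bool" where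
  "computes X e n f \<longleftrightarrow> (\<forall>xs. length xs = n \<longrightarrow> eval X e xs (f xs))"

named_theorems computes_intros

lemma computes_cong: "computes X e n f \<Longrightarrow> (\<And>xs. length xs = n \<Longrightarrow> f xs = g xs) \<Longrightarrow> computes X e n g"
  unfolding computes_def by auto

lemma computes_Zero [computes_intros]: "computes X Zero n (\<lambda>_. 0)"
  unfolding computes_def by (auto intro: eval.intros)

lemma computes_Succ [computes_intros]: "0 < n \<Longrightarrow> computes X Succ n (\<lambda>xs. Suc (hd xs))"
  unfolding computes_def by (metis eval_Succ length_0_conv less_numeral_extra(3) list.exhaust_sel)

lemma computes_Proj [computes_intros]: "i < n \<Longrightarrow> computes X (Proj i) n (\<lambda>xs. xs ! i)"
  unfolding computes_def by (auto intro: eval.intros)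

lemma computes_Orc [computes_intros]: "0 < n \<Longrightarrow> computes X Orc n (\<lambda>xs. X (hd xs))"
  unfolding computes_def by (metis eval_Orc length_0_conv less_numeral_extra(3) list.exhaust_sel)

lemma computes_Comp [computes_intros]:
  assumes "length gs = m" "computes X f m F" "list_all2 (\<lambda>g h. computes X g n h) gs hs"
  shows "computes X (Comp f gs) n (\<lambda>xs. F (map (\<lambda>h. h xs) hs))"
  unfolding computes_def
proof (intro allI impI)
  fix xs :: "nat list" assume "length xs = n"
  moreover have "length hs = length gs"
    using assms(3) by (simp add: list_all2_lengthD)
  ultimately show "eval X (Comp f gs) xs (F (map (\<lambda>h. h xs) hs))"
    using assms list_all2_nthD unfolding computes_def
    by (intro eval_Comp[where ys = "map (\<lambda>h. h xs) hs"]) fastforce+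
qed

lemmas [computes_intros] = list.rel_intros

lemma computes_Prec:
  assumes f: "computes X f n g" and h: "computes X h (Suc (Suc n)) k"
    and F0: "\<And>ys. length ys = n \<Longrightarrow> F (0 # ys) = g ys"
    and FSuc: "\<And>a ys. length ys = n \<Longrightarrow> F (Suc a # ys) = k (F (a # ys) # a # ys)"
  shows "computes X (Prec f h) (Suc n) F"
  unfolding computes_def
proof (intro allI impI)
  fix xs :: "nat list" assume "length xs = Suc n"
  then obtain a ys where xs: "xs = a # ys" and "length ys = n"
    by (cases xs) auto
  have "eval X (Prec f h) (a # ys) (F (a # ys))"
    using f h F0 FSuc \<open>length ys = n\<close> unfolding computes_def by (induction a) (auto intro: eval.intros)
  then show "eval X (Prec f h) xs (F xs)"
    using xs by simp
qed

text \<open>Arities are stated as hypotheses \<open>n = \<dots>\<close> so that the rules match whatever form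
  (numeral, successor, schematic) the arity has in a goal.\<close>

definition rf_add :: recf where "rf_add = Prec (Proj 0) (Comp Succ [Proj 0])"

lemma computes_rf_add [computes_intros]: "n = 2 \<Longrightarrow> computes X rf_add n (\<lambda>xs. xs ! 0 + xs ! 1)"
  unfolding rf_add_def numeral_2_eq_2 by (simp, rule computes_Prec) (rule computes_intros | simp)+

definition rf_mul :: recf where "rf_mul = Prec Zero (Comp rf_add [Proj 0, Proj 2])"

lemma computes_rf_mul [computes_intros]: "n = 2 \<Longrightarrow> computes X rf_mul n (\<lambda>xs. xs ! 0 * xs ! 1)"
  unfolding rf_mul_def numeral_2_eq_2 by (simp, rule computes_Prec) (rule computes_intros | simp)+

definition rf_pred :: recf where "rf_pred = Prec Zero (Proj 1)"

lemma computes_rf_pred [computes_intros]: "n = 1 \<Longrightarrow> computes X rf_pred n (\<lambda>xs. xs ! 0 - 1)"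
  unfolding rf_pred_def One_nat_def by (simp, rule computes_Prec) (rule computes_intros | simp)+

definition rf_is_zero :: recf where "rf_is_zero = Prec (Comp Succ [Zero]) Zero"

lemma computes_rf_is_zero [computes_intros]: "n = 1 \<Longrightarrow> computes X rf_is_zero n (\<lambda>xs. of_bool (xs ! 0 = 0))"
  unfolding rf_is_zero_def One_nat_def by (simp, rule computes_Prec) (rule computes_intros | simp)+

definition rf_nonzero :: recf where "rf_nonzero = Comp rf_is_zero [rf_is_zero]"

lemma computes_rf_nonzero [computes_intros]: "n = 1 \<Longrightarrow> computes X rf_nonzero n (\<lambda>xs. of_bool (xs ! 0 \<noteq> 0))"
  unfolding rf_nonzero_def by (rule computes_cong) (rule computes_intros | simp)+

definition rf_odd :: recf where "rf_odd = Prec Zero (Comp rf_is_zero [Proj 0])"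

lemma computes_rf_odd [computes_intros]: "n = 1 \<Longrightarrow> computes X rf_odd n (\<lambda>xs. of_bool (odd (xs ! 0)))"
  unfolding rf_odd_def One_nat_def by (simp, rule computes_Prec) (rule computes_intros | simp)+

definition rf_half :: recf where "rf_half = Prec Zero (Comp rf_add [Proj 0, Comp rf_odd [Proj 1]])"

lemma computes_rf_half [computes_intros]: "n = 1 \<Longrightarrow> computes X rf_half n (\<lambda>xs. xs ! 0 div 2)"
  unfolding rf_half_def One_nat_def by (simp, rule computes_Prec) (rule computes_intros | simp)+

definition rf_pow2 :: recf where "rf_pow2 = Prec (Comp Succ [Zero]) (Comp rf_add [Proj 0, Proj 0])"

lemma computes_rf_pow2 [computes_intros]: "n = 1 \<Longrightarrow> computes X rf_pow2 n (\<lambda>xs. 2 ^ (xs ! 0))"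
  unfolding rf_pow2_def One_nat_def by (simp, rule computes_Prec) (rule computes_intros | simp)+

definition rf_triangle :: recf where "rf_triangle = Prec Zero (Comp rf_add [Proj 0, Comp Succ [Proj 1]])"

lemma computes_rf_triangle [computes_intros]: "n = 1 \<Longrightarrow> computes X rf_triangle n (\<lambda>xs. triangle (xs ! 0))"
  unfolding rf_triangle_def One_nat_def by (simp, rule computes_Prec) (rule computes_intros | simp)+

definition rf_prod_encode :: recf where "rf_prod_encode = Comp rf_add [Comp rf_triangle [rf_add], Proj 0]"

lemma computes_rf_prod_encode [computes_intros]:
  "n = 2 \<Longrightarrow> computes X rf_prod_encode n (\<lambda>xs. prod_encode (xs ! 0, xs ! 1))"
  unfolding rf_prod_encode_def prod_encode_def by (rule computes_cong) (rule computes_intros | simp)+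

definition rf_and :: recf where "rf_and = Comp rf_mul [Comp rf_nonzero [Proj 0], Comp rf_nonzero [Proj 1]]"

lemma computes_rf_and [computes_intros]:
  "n = 2 \<Longrightarrow> computes X rf_and n (\<lambda>xs. of_bool (xs ! 0 \<noteq> 0 \<and> xs ! 1 \<noteq> 0))"
  unfolding rf_and_def by (rule computes_cong) (rule computes_intros | simp)+

definition rf_or :: recf where "rf_or = Comp rf_nonzero [rf_add]"

lemma computes_rf_or [computes_intros]:
  "n = 2 \<Longrightarrow> computes X rf_or n (\<lambda>xs. of_bool (xs ! 0 \<noteq> 0 \<or> xs ! 1 \<noteq> 0))"
  unfolding rf_or_def by (rule computes_cong) (rule computes_intros | simp)+

definition rf_imp :: recf where "rf_imp = Comp rf_or [Comp rf_is_zero [Proj 0], Proj 1]"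

lemma computes_rf_imp [computes_intros]:
  "n = 2 \<Longrightarrow> computes X rf_imp n (\<lambda>xs. of_bool (xs ! 0 \<noteq> 0 \<longrightarrow> xs ! 1 \<noteq> 0))"
  unfolding rf_imp_def by (rule computes_cong) (rule computes_intros | simp)+

definition rf_ball :: "recf \<Rightarrow> nat \<Rightarrow> recf" where
  "rf_ball P k = Prec (Comp Succ [Zero]) (Comp rf_and [Proj 0, Comp P (map Proj [1..<k+2])])"

definition rf_bex :: "recf \<Rightarrow> nat \<Rightarrow> recf" where
  "rf_bex P k = Prec Zero (Comp rf_or [Proj 0, Comp P (map Proj [1..<k+2])])"

lemma computes_drop_first:
  assumes "computes X P (Suc k) p"
  shows "computes X (Comp P (map Proj [1..<k+2])) (Suc (Suc k)) (\<lambda>xs. p (tl xs))"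
proof (rule computes_cong)
  show "computes X (Comp P (map Proj [1..<k+2])) (Suc (Suc k))
      (\<lambda>xs. p (map (\<lambda>h. h xs) (map (\<lambda>i xs. xs ! i) [1..<k+2])))"
    using assms by (intro computes_Comp) (auto simp: list_all2_conv_all_nth computes_Proj simp del: upt_Suc)
  show "p (map (\<lambda>h. h xs) (map (\<lambda>i xs. xs ! i) [1..<k+2])) = p (tl xs)" if "length xs = Suc (Suc k)" for xs
    using that by (auto intro!: arg_cong[where f = p] nth_equalityI simp: nth_tl simp del: upt_Suc)
qed

lemma computes_rf_ball [computes_intros]:
  assumes "computes X P (Suc k) p" "n = Suc k"
  shows "computes X (rf_ball P k) n (\<lambda>xs. of_bool (\<forall>m<hd xs. p (m # tl xs) \<noteq> 0))"
  unfolding rf_ball_def \<open>n = Suc k\<close>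
  by (rule computes_Prec) (rule computes_drop_first[OF assms(1)] computes_intros | simp add: All_less_Suc)+

lemma computes_rf_bex [computes_intros]:
  assumes "computes X P (Suc k) p" "n = Suc k"
  shows "computes X (rf_bex P k) n (\<lambda>xs. of_bool (\<exists>m<hd xs. p (m # tl xs) \<noteq> 0))"
  unfolding rf_bex_def \<open>n = Suc k\<close>
  by (rule computes_Prec) (rule computes_drop_first[OF assms(1)] computes_intros | simp add: Ex_less_Suc)+


section \<open>Computing the tree and the labelling from the oracle\<close>

lemma bin_code_inj: "bin_code xs = bin_code ys \<Longrightarrow> xs = ys"
proof (induction xs arbitrary: ys)
  case Nil
  then show ?case
    by (cases ys) (auto split: if_splits)
next
  case (Cons b bs)
  then obtain c cs where ys: "ys = c # cs"
    by (cases ys) (auto split: if_splits)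
  with Cons.prems have "2 * bin_code bs + (if b then 2 else 1) = 2 * bin_code cs + (if c then 2 else 1)"
    by simp
  then have "b = c" and "bin_code bs = bin_code cs"
    by (cases b; cases c; presburger)+
  then show ?case
    using Cons.IH ys by auto
qed

lemma bin_code_surj: "\<exists>\<sigma>. bin_code \<sigma> = n"
proof (induction n rule: less_induct)
  case (less n)
  show ?case
  proof (cases "n = 0")
    case False
    then obtain \<sigma> where "bin_code \<sigma> = (n - 1) div 2"
      using less.IH by fastforce
    then have "bin_code (even n # \<sigma>) = n"
      using False by simp presburger
    then show ?thesis ..
  qed (use bin_code.simps(1) in blast)
qed

lemma length_le_bin_code: "length xs \<le> bin_code xs"
  by (induction xs) auto

lemma bin_code_snoc: "bin_code (xs @ [b]) = bin_code xs + 2 ^ length xs * (if b then 2 else 1)"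
  by (induction xs) auto

definition code_tl :: "nat \<Rightarrow> nat" where
  "code_tl c = (c - 1) div 2"

definition code_zero :: "nat \<Rightarrow> nat \<Rightarrow> bool" where
  "code_zero c k \<longleftrightarrow> (code_tl ^^ k) c \<noteq> 0 \<and> odd ((code_tl ^^ k) c)"

lemma code_tl_bin_code: "code_tl (bin_code xs) = bin_code (tl xs)"
  by (cases xs) (auto simp: code_tl_def)

lemma funpow_code_tl_bin_code: "(code_tl ^^ k) (bin_code xs) = bin_code (drop k xs)"
  by (induction k) (simp_all add: code_tl_bin_code drop_Suc tl_drop)

lemma code_zero_bin_code: "code_zero (bin_code \<sigma>) k \<longleftrightarrow> k < length \<sigma> \<and> \<not> \<sigma> ! k"
proof (cases "k < length \<sigma>")
  case True
  then show ?thesis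
    by (simp add: code_zero_def funpow_code_tl_bin_code Cons_nth_drop_Suc[symmetric])
qed (simp add: code_zero_def funpow_code_tl_bin_code)

definition rf_code_tl :: recf where "rf_code_tl = Comp rf_half [rf_pred]"

lemma computes_rf_code_tl [computes_intros]: "n = 1 \<Longrightarrow> computes X rf_code_tl n (\<lambda>xs. code_tl (xs ! 0))"
  unfolding rf_code_tl_def code_tl_def by (rule computes_cong) (rule computes_intros | simp)+

definition rf_code_drop :: recf where "rf_code_drop = Prec (Proj 0) (Comp rf_code_tl [Proj 0])"

lemma computes_rf_code_drop [computes_intros]:
  "n = 2 \<Longrightarrow> computes X rf_code_drop n (\<lambda>xs. (code_tl ^^ (xs ! 0)) (xs ! 1))"
  unfolding rf_code_drop_def numeral_2_eq_2 by (simp, rule computes_Prec) (rule computes_intros | simp)+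

definition rf_code_zero :: recf where
  "rf_code_zero = Comp rf_and [Comp rf_nonzero [rf_code_drop], Comp rf_odd [rf_code_drop]]"

lemma computes_rf_code_zero [computes_intros]:
  "n = 2 \<Longrightarrow> computes X rf_code_zero n (\<lambda>xs. of_bool (code_zero (xs ! 1) (xs ! 0)))"
  unfolding rf_code_zero_def code_zero_def by (rule computes_cong) (rule computes_intros | simp)+

definition oracle_set :: "(nat \<Rightarrow> nat) \<Rightarrow> nat set" where
  "oracle_set X = {k. X (2 * k) \<noteq> 0}"

definition oracle_rel :: "(nat \<Rightarrow> nat) \<Rightarrow> (nat \<times> nat) set" where
  "oracle_rel X = {(a, b). X (2 * prod_encode (a, b) + 1) \<noteq> 0}"

lemma oracle_set_order_oracle: "oracle_set (order_oracle A r) = A"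
  unfolding oracle_set_def order_oracle_def by simp

lemma oracle_rel_order_oracle: "oracle_rel (order_oracle A r) = r"
proof -
  have "prod_encode (a, b) \<in> order_code r \<longleftrightarrow> (a, b) \<in> r" for a b
    unfolding order_code_def using inj_prod_encode[of UNIV] by (auto simp: inj_on_def)
  then show ?thesis
    unfolding oracle_rel_def order_oracle_def by auto
qed

definition rf_in_set :: recf where
  "rf_in_set = Comp rf_nonzero [Comp Orc [Comp rf_add [Proj 0, Proj 0]]]"

lemma computes_rf_in_set [computes_intros]:
  "n = 1 \<Longrightarrow> computes X rf_in_set n (\<lambda>xs. of_bool (xs ! 0 \<in> oracle_set X))"
  unfolding rf_in_set_def oracle_set_def by (rule computes_cong) (rule computes_intros | simp add: mult_2)+

definition rf_in_rel :: recf where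
  "rf_in_rel = Comp rf_nonzero [Comp Orc [Comp Succ [Comp rf_add [rf_prod_encode, rf_prod_encode]]]]"

lemma computes_rf_in_rel [computes_intros]:
  "n = 2 \<Longrightarrow> computes X rf_in_rel n (\<lambda>xs. of_bool ((xs ! 0, xs ! 1) \<in> oracle_rel X))"
  unfolding rf_in_rel_def oracle_rel_def by (rule computes_cong) (rule computes_intros | simp add: mult_2)+

definition tree_formula :: "(nat \<Rightarrow> nat) \<Rightarrow> nat \<Rightarrow> bool" where
  "tree_formula X c \<longleftrightarrow> (\<forall>k<c. code_zero c k \<longrightarrow>
     may_be_zero (oracle_set X) (oracle_rel X) (\<lambda>m. \<not> code_zero c m) k)"

text \<open>\<open>rf_tree\<close> evaluates the bounded formula \<open>tree_formula\<close>; the arguments of its parts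
  are \<open>[m', m, k, c]\<close>, \<open>[m, k, c]\<close> and \<open>[k, c]\<close> respectively.\<close>

definition rf_earlier_zero_below :: recf where
  "rf_earlier_zero_below =
     Comp rf_and [Comp rf_code_zero [Proj 0, Proj 3], Comp rf_in_rel [Proj 0, Proj 1]]"

definition rf_earlier_position_ok :: recf where
  "rf_earlier_position_ok = Comp rf_imp [Comp rf_in_set [Proj 0],
     Comp rf_and [Comp rf_imp [Comp rf_code_zero [Proj 0, Proj 2], Comp rf_in_rel [Proj 1, Proj 0]],
       Comp rf_imp [Comp rf_is_zero [Comp rf_code_zero [Proj 0, Proj 2]],
         Comp rf_or [Comp rf_in_rel [Proj 0, Proj 1],
           Comp (rf_bex rf_earlier_zero_below 3) [Proj 0, Proj 0, Proj 1, Proj 2]]]]]"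

definition rf_zero_ok :: recf where
  "rf_zero_ok = Comp rf_imp [Comp rf_code_zero [Proj 0, Proj 1],
     Comp rf_and [Comp rf_in_set [Proj 0], Comp (rf_ball rf_earlier_position_ok 2) [Proj 0, Proj 0, Proj 1]]]"

definition rf_tree :: recf where
  "rf_tree = Comp (rf_ball rf_zero_ok 1) [Proj 0, Proj 0]"

lemma computes_rf_tree: "computes X rf_tree 1 (\<lambda>xs. of_bool (tree_formula X (hd xs)))"
  unfolding rf_tree_def rf_zero_ok_def rf_earlier_position_ok_def rf_earlier_zero_below_def
  apply (rule computes_cong)
   apply (rule computes_intros | simp)+
  apply (clarsimp simp: length_Suc_conv)
  apply (simp add: tree_formula_def may_be_zero_def)
  apply blast
  done

definition rf_cut_path_bit :: recf where
  "rf_cut_path_bit = Comp rf_is_zero [Comp rf_and [Comp rf_in_set [Proj 0],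
     Comp rf_and [Comp rf_is_zero [Comp rf_in_rel [Proj 0, Proj 1]],
       Comp (rf_ball (Comp rf_imp [Comp rf_in_set [Proj 0],
           Comp rf_imp [Comp rf_is_zero [Comp rf_in_rel [Proj 0, Proj 2]], Comp rf_in_rel [Proj 1, Proj 0]]]) 2)
         [Proj 0, Proj 0, Proj 1]]]]"

lemma computes_rf_cut_path_bit [computes_intros]:
  "n = 2 \<Longrightarrow> computes X rf_cut_path_bit n
     (\<lambda>xs. of_bool (cut_path (oracle_set X) (oracle_rel X) (below (oracle_rel X) (xs ! 1)) (xs ! 0)))"
  unfolding rf_cut_path_bit_def
  apply (rule computes_cong)
   apply (rule computes_intros | simp)+
  apply (auto simp: length_Suc_conv numeral_2_eq_2 cut_path_def below_def)
  done

definition rf_label_prefix :: recf where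
  "rf_label_prefix = Prec Zero (Comp rf_add [Proj 0, Comp rf_mul [Comp rf_pow2 [Proj 1],
     Comp Succ [Comp rf_nonzero [Comp rf_cut_path_bit [Proj 1, Proj 2]]]]])"

lemma computes_rf_label_prefix [computes_intros]:
  "n = 2 \<Longrightarrow> computes X rf_label_prefix n (\<lambda>xs. bin_code
     (map (cut_path (oracle_set X) (oracle_rel X) (below (oracle_rel X) (xs ! 1))) [0..<xs ! 0]))"
  unfolding rf_label_prefix_def numeral_2_eq_2
  by (simp, rule computes_Prec) (rule computes_intros | simp add: bin_code_snoc)+

definition rf_label :: recf where
  "rf_label = Comp rf_label_prefix [Comp Succ [Proj 0], Proj 0]"

lemma computes_rf_label:
  "computes X rf_label 1 (\<lambda>xs. bin_code (order_label (oracle_set X) (oracle_rel X) (hd xs)))"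
  unfolding rf_label_def order_label_def
  apply (rule computes_cong)
   apply (rule computes_intros | simp)+
  apply (clarsimp simp: length_Suc_conv)
  done

lemma tree_formula_bin_code:
  "tree_formula X (bin_code \<sigma>) \<longleftrightarrow> \<sigma> \<in> order_tree (oracle_set X) (oracle_rel X)"
proof -
  have "may_be_zero A r (\<lambda>m. \<not> code_zero (bin_code \<sigma>) m) k = may_be_zero A r (nth \<sigma>) k"
    if "k < length \<sigma>" for A r k
    using that by (intro may_be_zero_cong) (simp add: code_zero_bin_code)
  then show ?thesis
    using length_le_bin_code[of \<sigma>]
    unfolding tree_formula_def order_tree_def code_zero_bin_code by auto
qed

lemma eval_rf_tree_iff: "eval X rf_tree [c] y \<longleftrightarrow> y = of_bool (tree_formula X c)"
proof -
  have "eval X rf_tree [c] (of_bool (tree_formula X c))"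
    using computes_rf_tree[of X, unfolded computes_def, rule_format, of "[c]"] by simp
  then show ?thesis
    using eval_deterministic by blast
qed

lemma treeR_rf_tree: "treeR rf_tree X = order_tree (oracle_set X) (oracle_rel X)"
  unfolding treeR_def eval_rf_tree_iff by (simp add: tree_formula_bin_code)

lemma computes_set_rf_tree:
  "computes_set X rf_tree (bin_code ` order_tree (oracle_set X) (oracle_rel X))"
proof -
  have "n \<in> bin_code ` order_tree (oracle_set X) (oracle_rel X) \<longleftrightarrow> tree_formula X n" for n
    using bin_code_surj[of n] tree_formula_bin_code by auto
  then show ?thesis
    unfolding computes_set_def eval_rf_tree_iff by simp
qed

lemma eval_rf_label_iff:
  "eval X rf_label [a] y \<longleftrightarrow> y = bin_code (order_label (oracle_set X) (oracle_rel X) a)"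
proof -
  have "eval X rf_label [a] (bin_code (order_label (oracle_set X) (oracle_rel X) a))"
    using computes_rf_label[of X, unfolded computes_def, rule_format, of "[a]"] by simp
  then show ?thesis
    using eval_deterministic by blast
qed

lemma labR_rf_label: "labR rf_label X = order_label (oracle_set X) (oracle_rel X)"
  unfolding labR_def eval_rf_label_iff using bin_code_inj by (intro ext the_equality) auto

lemma computes_fun_on_rf_label:
  "computes_fun_on X rf_label A (bin_code \<circ> order_label (oracle_set X) (oracle_rel X))"
  unfolding computes_fun_on_def eval_rf_label_iff by simp

theorem lemma4p3:
  "\<exists>eT el :: recf.
     (\<forall>A r. strict_lin_order_on A r \<longrightarrow>
        (let X = order_oracle A r; T = treeR eT X; l = labR el X in
           computes_set X eT (bin_code ` T)
         \<and> computes_fun_on X el A (bin_code \<circ> l)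
         \<and> is_tree T
         \<and> (\<forall>a \<in> A. l a \<in> T)
         \<and> (\<forall>\<sigma> \<in> T. (\<sigma> \<noteq> [] \<and> \<not> last \<sigma>) \<longleftrightarrow> (\<exists>a \<in> A. \<sigma> = l a))
         \<and> (\<forall>a \<in> A. ext_ones (l a) \<in> paths T)
         \<and> (\<forall>a \<in> A. \<forall>b \<in> A. (a, b) \<in> r \<longleftrightarrow> lexless (ext_ones (l a)) (ext_ones (l b)))
         \<and> (\<forall>Y \<in> paths T. (\<exists>a \<in> A. Y = ext_ones (l a)) \<longleftrightarrow>
              (\<exists>Z \<in> paths T. lexless Y Z \<and> \<not> (\<exists>W \<in> paths T. lexless Y W \<and> lexless W Z)))))
   \<and> (\<forall>A r B s. strict_lin_order_on A r \<longrightarrow> strict_lin_order_on B s \<longrightarrow>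
        ord_iso A r B s \<longrightarrow>
        ord_iso (paths (treeR eT (order_oracle A r))) lex_rel
                (paths (treeR eT (order_oracle B s))) lex_rel)
   \<and> (\<forall>A r B s. strict_lin_order_on A r \<longrightarrow> strict_lin_order_on B s \<longrightarrow>
        (ord_iso A r B s \<longleftrightarrow>
         ord_iso (paths (treeR eT (order_oracle A r))) lex_rel
                 (paths (treeR eT (order_oracle B s))) lex_rel))"
proof (rule exI[of _ rf_tree], rule exI[of _ rf_label], intro conjI allI impI, goal_cases)
  case (1 A r)
  then interpret strict_lin_order A r
    by (rule strict_lin_order.intro)
  have "Y \<in> with_succ (paths T) lex_rel \<longleftrightarrow>
      (\<exists>Z \<in> paths T. lexless Y Z \<and> \<not> (\<exists>W \<in> paths T. lexless Y W \<and> lexless W Z))"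
    if "Y \<in> paths T" for Y
    using that unfolding with_succ_def lex_rel_def by simp
  then show ?case
    unfolding Let_def treeR_rf_tree labR_rf_label oracle_set_order_oracle oracle_rel_order_oracle
    using computes_set_rf_tree[of "order_oracle A r"] computes_fun_on_rf_label[of "order_oracle A r" A]
      order_tree_is_tree order_label_in_tree ends_with_zero_iff_order_label
      ext_ones_order_label_in_paths less_iff_lexless_order_label order_label_iff_with_succ
    by (simp add: oracle_set_order_oracle oracle_rel_order_oracle)
next
  case (2 A r B s)
  then show ?case
    unfolding treeR_rf_tree oracle_set_order_oracle oracle_rel_order_oracle
    using ord_iso_iff_ord_iso_paths_order_tree by blast
next
  case (3 A r B s)
  then show ?case
    unfolding treeR_rf_tree oracle_set_order_oracle oracle_rel_order_oracle
    by (rule ord_iso_iff_ord_iso_paths_order_tree)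
qed

end
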